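(* Let $1\le k<n$, let $C$ be an $n\times n$ pairwise comparison matrix whose upper-left $k\times k$ submatrix $C_k$ is consistent (equivalently $\mathit{CI}(C_k)=0$ when $k\ge2$). Then the matrix $A_k=I_k-\frac{1}{n-1}(C_k-I_k)$ is invertible, so the arithmetic HRE system $A_k w=b$ with $b_i=\frac{1}{n-1}\sum_{j=k+1}^n c_{ij}w(a_j)$ ($i=1,\dots,k$) has a unique solution for any positive reference weights $w(a_{k+1}),\dots,w(a_n)$.
   Context: A pairwise comparison matrix is a square matrix with positive entries, $c_{ii}=1$ and $c_{ij}=1/c_{ji}$. It is consistent if $c_{ij}c_{jl}=c_{il}$ for all indices $i,j,l$. For a $k\times k$ pairwise comparison matrix $M$ ($k\ge 2$), $\mathit{CI}(M)=\frac{\rho(M)-k}{k-1}$ with $\rho$ the spectral radius. *)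

theory Defs
  imports "Jordan_Normal_Form.Matrix"
begin

(* Matrices are 0-indexed: entry c_{ij} (1-based) is C $$ (i-1, j-1). *)

definition pairwise_comparison_matrix :: "real mat \<Rightarrow> bool" where
  "pairwise_comparison_matrix C \<longleftrightarrow> dim_row C = dim_col C \<and>
     (\<forall>i < dim_row C. \<forall>j < dim_row C. C $$ (i,j) > 0 \<and> C $$ (i,j) = 1 / C $$ (j,i)) \<and>
     (\<forall>i < dim_row C. C $$ (i,i) = 1)"

definition consistent_pcm :: "real mat \<Rightarrow> bool" where
  "consistent_pcm C \<longleftrightarrow> pairwise_comparison_matrix C \<and>
     (\<forall>i < dim_row C. \<forall>j < dim_row C. \<forall>l < dim_row C. C $$ (i,j) * C $$ (j,l) = C $$ (i,l))"

definition upper_left :: "nat \<Rightarrow> real mat \<Rightarrow> real mat" where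
  "upper_left k C = mat k k (\<lambda>(i,j). C $$ (i,j))"

definition hre_matrix :: "nat \<Rightarrow> nat \<Rightarrow> real mat \<Rightarrow> real mat" where
  "hre_matrix n k C = 1\<^sub>m k - (1 / (real n - 1)) \<cdot>\<^sub>m (upper_left k C - 1\<^sub>m k)"

(* b_i = 1/(n-1) sum_{j=k+1}^n c_ij w(a_j), with reference weights wr j for j in {k..<n} (0-based) *)
definition hre_rhs :: "nat \<Rightarrow> nat \<Rightarrow> real mat \<Rightarrow> (nat \<Rightarrow> real) \<Rightarrow> real vec" where
  "hre_rhs n k C wr = vec k (\<lambda>i. (1 / (real n - 1)) * (\<Sum>j\<in>{k..<n}. C $$ (i,j) * wr j))"

end

theory Submission
  imports Defs "Jordan_Normal_Form.Determinant"
begin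

text \<open>A consistent pairwise comparison matrix has rank one: \<open>c\<^sub>i\<^sub>j = c\<^sub>i\<^sub>1 c\<^sub>1\<^sub>j\<close>, so
  \<open>C\<^sub>k w = (r \<bullet> w) c\<close> with \<open>r\<close> its first row, \<open>c\<close> its first column, and \<open>r \<bullet> c = k\<close>.
  Writing \<open>t = 1/(n-1)\<close>, we have \<open>A\<^sub>k = (1 + t) I - t C\<^sub>k\<close>. If \<open>A\<^sub>k w = 0\<close>, then
  \<open>(1 + t) w = t (r \<bullet> w) c\<close>; pairing with \<open>r\<close> gives \<open>(1 + t - t k) (r \<bullet> w) = 0\<close>, and
  \<open>1 + t - t k = (n - k)/(n - 1) > 0\<close>. Hence \<open>r \<bullet> w = 0\<close> and then \<open>w = 0\<close>, so \<open>A\<^sub>k\<close>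
  has trivial kernel and is invertible.\<close>

lemma smult_mult_mat_vec:
  fixes A :: "'a :: comm_semiring_0 mat"
  assumes "A \<in> carrier_mat nr nc" "v \<in> carrier_vec nc"
  shows "(a \<cdot>\<^sub>m A) *\<^sub>v v = a \<cdot>\<^sub>v (A *\<^sub>v v)"
  using assms by (intro eq_vecI) (auto simp: scalar_prod_def sum_distrib_left mult.assoc)

lemma invertible_mat_if_kernel_trivial:
  fixes A :: "'a :: field mat"
  assumes A: "A \<in> carrier_mat n n"
    and kernel: "\<And>v. v \<in> carrier_vec n \<Longrightarrow> A *\<^sub>v v = 0\<^sub>v n \<Longrightarrow> v = 0\<^sub>v n"
  shows "invertible_mat A"
proof -
  have "det A \<noteq> 0"
    using kernel unfolding det_0_iff_vec_prod_zero[OF A] by blast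
  from det_non_zero_imp_unit[OF A this, of "()"]
  obtain B where "B * A = 1\<^sub>m n" "A * B = 1\<^sub>m n" "B \<in> carrier_mat n n"
    unfolding Units_def ring_mat_def by auto
  then have "inverts_mat A B" "inverts_mat B A"
    using A unfolding inverts_mat_def by auto
  then show ?thesis
    using A unfolding invertible_mat_def square_mat.simps by blast
qed

lemma invertible_mat_ex1_solution:
  fixes A :: "'a :: comm_ring_1 mat"
  assumes "invertible_mat A" "A \<in> carrier_mat n n" "b \<in> carrier_vec n"
  shows "\<exists>!x. x \<in> carrier_vec n \<and> A *\<^sub>v x = b"
proof -
  obtain B where AB: "A * B = 1\<^sub>m n" and BA: "B * A = 1\<^sub>m (dim_row B)"
    using assms(1,2) unfolding invertible_mat_def inverts_mat_def by auto
  have B: "B \<in> carrier_mat n n"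
    using arg_cong[OF AB, of dim_col] arg_cong[OF BA, of dim_col] assms(2) by auto
  from BA have BA: "B * A = 1\<^sub>m n"
    using B by simp
  show ?thesis
  proof (rule ex1I[of _ "B *\<^sub>v b"])
    show "B *\<^sub>v b \<in> carrier_vec n \<and> A *\<^sub>v (B *\<^sub>v b) = b"
      using assms(2,3) B AB by (simp add: assoc_mult_mat_vec[symmetric])
  next
    fix x assume x: "x \<in> carrier_vec n \<and> A *\<^sub>v x = b"
    then have "x = (B * A) *\<^sub>v x" using BA by simp
    also have "\<dots> = B *\<^sub>v b" using x assms(2) B by (simp add: assoc_mult_mat_vec)
    finally show "x = B *\<^sub>v b" .
  qed
qed

lemma consistent_pcm_entry_factor:
  assumes "consistent_pcm M" "i < dim_row M" "j < dim_row M"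
  shows "M $$ (i, j) = M $$ (i, 0) * M $$ (0, j)"
proof -
  have "0 < dim_row M" using assms(2) by simp
  then show ?thesis
    using assms unfolding consistent_pcm_def by simp
qed

lemma consistent_pcm_mult_vec:
  assumes M: "consistent_pcm M" "M \<in> carrier_mat k k" and w: "w \<in> carrier_vec k"
  shows "M *\<^sub>v w = (row M 0 \<bullet> w) \<cdot>\<^sub>v col M 0"
proof (rule eq_vecI)
  fix i assume "i < dim_vec ((row M 0 \<bullet> w) \<cdot>\<^sub>v col M 0)"
  then have i: "i < k" using M by simp
  have "(M *\<^sub>v w) $ i = (\<Sum>j<k. M $$ (i, j) * w $ j)"
    using M w i by (simp add: scalar_prod_def lessThan_atLeast0)
  also have "\<dots> = (\<Sum>j<k. M $$ (i, 0) * (M $$ (0, j) * w $ j))"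
  proof (rule sum.cong)
    fix j assume "j \<in> {..<k}"
    then show "M $$ (i, j) * w $ j = M $$ (i, 0) * (M $$ (0, j) * w $ j)"
      using M i consistent_pcm_entry_factor[OF M(1), of i j] by simp
  qed simp
  also have "\<dots> = M $$ (i, 0) * (row M 0 \<bullet> w)"
    using M w i by (simp add: scalar_prod_def lessThan_atLeast0 sum_distrib_left)
  finally show "(M *\<^sub>v w) $ i = ((row M 0 \<bullet> w) \<cdot>\<^sub>v col M 0) $ i"
    using M i by (simp add: mult.commute)
qed (use M in simp)

lemma consistent_pcm_row0_col0:
  assumes M: "consistent_pcm M" "M \<in> carrier_mat k k"
  shows "row M 0 \<bullet> col M 0 = real k"
proof -
  have "M $$ (0, j) * M $$ (j, 0) = 1" if "j < k" for j
  proof -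
    have "\<forall>i < dim_row M. M $$ (i, i) = 1"
      and "\<forall>i < dim_row M. \<forall>j < dim_row M. \<forall>l < dim_row M. M $$ (i, j) * M $$ (j, l) = M $$ (i, l)"
      using M(1) unfolding consistent_pcm_def pairwise_comparison_matrix_def by blast+
    then show ?thesis
      using M(2) that by simp
  qed
  then show ?thesis
    using M by (simp add: scalar_prod_def)
qed

lemma shifted_consistent_pcm_kernel_trivial:
  fixes t :: real
  assumes M: "consistent_pcm M" "M \<in> carrier_mat k k"
    and t: "1 + t \<noteq> 0" "1 + t \<noteq> t * real k"
    and w: "w \<in> carrier_vec k"
    and kernel: "((1 + t) \<cdot>\<^sub>m 1\<^sub>m k - t \<cdot>\<^sub>m M) *\<^sub>v w = 0\<^sub>v k"
  shows "w = 0\<^sub>v k"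
proof -
  define s where "s = row M 0 \<bullet> w"
  have row: "row M 0 \<in> carrier_vec k" and col: "col M 0 \<in> carrier_vec k"
    using M(2) by auto
  have kernel': "(1 + t) \<cdot>\<^sub>v w - (t * s) \<cdot>\<^sub>v col M 0 = 0\<^sub>v k"
    using kernel M w
    by (simp add: minus_mult_distrib_mat_vec[of _ k k] smult_mult_mat_vec[of _ k k]
        consistent_pcm_mult_vec[OF M w] smult_smult_assoc s_def)
  have "(1 + t - t * real k) * s = row M 0 \<bullet> ((1 + t) \<cdot>\<^sub>v w - (t * s) \<cdot>\<^sub>v col M 0)"
    using row col w
    by (simp add: scalar_prod_minus_distrib[of _ k] consistent_pcm_row0_col0[OF M] s_def algebra_simps)
  also have "\<dots> = 0"
    using kernel' row by simp
  finally have "s = 0"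
    using t(2) by simp
  moreover have "0 \<cdot>\<^sub>v col M 0 = 0\<^sub>v k"
    using M(2) by (intro eq_vecI) auto
  ultimately have w0: "(1 + t) \<cdot>\<^sub>v w = 0\<^sub>v k"
    using kernel' w by simp
  show ?thesis
  proof (rule eq_vecI)
    fix i assume "i < dim_vec (0\<^sub>v k :: real vec)"
    then have "(1 + t) * w $ i = 0"
      using arg_cong[OF w0, of "\<lambda>v. v $ i"] w by simp
    then show "w $ i = 0\<^sub>v k $ i"
      using t(1) \<open>i < dim_vec (0\<^sub>v k)\<close> by simp
  qed (use w in simp)
qed

lemma hre_matrix_eq:
  "hre_matrix n k C = (1 + 1 / (real n - 1)) \<cdot>\<^sub>m 1\<^sub>m k - (1 / (real n - 1)) \<cdot>\<^sub>m upper_left k C"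
  unfolding hre_matrix_def upper_left_def by (rule eq_matI) (auto simp: algebra_simps)

lemma invertible_hre_matrix:
  assumes "k < n" and consistent: "consistent_pcm (upper_left k C)"
  shows "invertible_mat (hre_matrix n k C)"
proof -
  define t where "t = 1 / (real n - 1)"
  have t_nonneg: "t \<ge> 0"
    using assms(1) by (simp add: t_def)
  have "1 + t - t * real k > 0"
  proof (cases "n = 1")
    case True
    then show ?thesis using assms(1) by (simp add: t_def)
  next
    case False
    then have "t * (real n - 1) = 1" "t > 0"
      using assms(1) by (auto simp: t_def)
    then have "1 + t - t * real k = t * (real n - real k)"
      by (simp add: algebra_simps)
    then show ?thesis
      using assms(1) \<open>t > 0\<close> by simp
  qed
  then have "1 + t \<noteq> 0" "1 + t \<noteq> t * real k"
    using t_nonneg by auto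
  moreover have "upper_left k C \<in> carrier_mat k k"
    unfolding upper_left_def by simp
  ultimately show ?thesis
    unfolding hre_matrix_eq t_def[symmetric]
    using shifted_consistent_pcm_kernel_trivial[OF consistent]
    by (intro invertible_mat_if_kernel_trivial[of _ k]) (simp_all add: minus_carrier_mat)
qed

theorem mainTheorem2:
  fixes n k :: nat and C :: "real mat"
  assumes "1 \<le> k" and "k < n"
    and "C \<in> carrier_mat n n"
    and "pairwise_comparison_matrix C"
    and "consistent_pcm (upper_left k C)"
  shows "invertible_mat (hre_matrix n k C) \<and>
         (\<forall>wr :: nat \<Rightarrow> real. (\<forall>j\<in>{k..<n}. wr j > 0) \<longrightarrow>
            (\<exists>!w. w \<in> carrier_vec k \<and> hre_matrix n k C *\<^sub>v w = hre_rhs n k C wr))"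
proof -
  have invertible: "invertible_mat (hre_matrix n k C)"
    using invertible_hre_matrix[OF assms(2,5)] .
  have "hre_matrix n k C \<in> carrier_mat k k"
    unfolding hre_matrix_eq upper_left_def by (simp add: minus_carrier_mat)
  moreover have "hre_rhs n k C wr \<in> carrier_vec k" for wr
    unfolding hre_rhs_def by simp
  ultimately show ?thesis
    using invertible invertible_mat_ex1_solution[OF invertible] by blast
qed

end
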